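(* Let $k\ge r\ge3$ and $p,t\ge 0$ be integers and let $\pi\in\mathbb{C}_{<}(k,r|p,t)$ with $\pi^{(2)}_p\ge 2t+6$. Then $2t+2$ and $2t+4$ do not both occur as parts of $\pi$.
   Context: A partition $\pi=(\pi_1,\dots,\pi_\ell)$ is a finite non-increasing sequence of positive integers; "$a$ occurs in $\pi$" means $a=\pi_i$ for some $i$. Göllnitz–Gordon marking: $GG(\pi)$ assigns a positive integer (mark) to each part, processing the parts from smallest to largest; $\pi_i$ receives the smallest positive integer different from the marks of all parts $\pi_g$ with $g>i$ and $\pi_i-\pi_g\le 2$, where $\pi_i-\pi_g<2$ is required when $\pi_i$ is odd. An "$r$-marked part $a$" is a part equal to $a$ with mark $r$. $N_i(\pi)$ is the number of parts with mark $i$; $\pi^{(i)}_1\ge\dots\ge\pi^{(i)}_{N_i(\pi)}$ are the parts with mark $i$, with $\pi^{(i)}_0=+\infty$, $\pi^{(i)}_{N_i(\pi)+1}=-\infty$. $\mathbb{C}(k,r)$: partitions with (i) no odd part repeated; (ii) $\pi_i\ge\pi_{i+k-1}+2$ for $1\le i\le\ell-k+1$, strict if $\pi_i$ even; (iii) at most $r-1$ parts $\le 2$. Starting types: for $\pi\in\mathbb{C}(k,r)$ with $N_2=N_2(\pi)\ge1$, let $l$ be the largest integer in $\{0,\dots,N_2\}$ such that no odd part of $\pi$ is $\ge\pi^{(2)}_l$; for $l<i\le N_2$, $\pi^{(2)}_i$ has type $s_{-1}$. For $b=1,\dots,l$ in increasing order, type and auxiliary $\sigma_b$: for $b=1$: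 Case 1: 1-marked part $\pi^{(2)}_1-1$ exists and $\pi^{(2)}_1+2$ does not occur: type $s_0$, $\sigma_1=\pi^{(2)}_1-1$; Case 2: 1-marked $\pi^{(2)}_1-2$ exists and $\pi^{(2)}_1+2$ does not occur: type $s_1$, $\sigma_1=\pi^{(2)}_1-2$; Case 3: 1-marked $\pi^{(2)}_1+2$ exists: type $s_2$, $\sigma_1=\pi^{(2)}_1+2$; Case 4: 1-marked $\pi^{(2)}_1$ exists: type $s_3$, $\sigma_1=\pi^{(2)}_1$. For $2\le b\le l$: Case 1: 1-marked $\pi^{(2)}_b-1$ exists and, if a 1-marked $\pi^{(2)}_b+2$ exists, $\sigma_{b-1}=\pi^{(2)}_b+2$: type $s_0$, $\sigma_b=\pi^{(2)}_b-1$; Case 2: same with $\pi^{(2)}_b-2$: type $s_1$, $\sigma_b=\pi^{(2)}_b-2$; Case 3: 1-marked $\pi^{(2)}_b+2$ exists and $\sigma_{b-1}\ne\pi^{(2)}_b+2$: type $s_2$, $\sigma_b=\pi^{(2)}_b+2$; Case 4: 1-marked $\pi^{(2)}_b$ exists: type $s_3$, $\sigma_b=\pi^{(2)}_b$. $\mathbb{C}_{<}(k,r|p,t)$: the set of $\pi\in\mathbb{C}(k,r)$ such that (1) no odd part is $\ge 2t+1$; (2) $\pi^{(2)}_{p+1}<2t+1<\pi^{(2)}_p$ (in particular $p\le N_2(\pi)$); (3) if $\pi^{(2)}_p=2t+2$ then it is of starting type $s_2$ or $s_3$; (4) if $\pi^{(2)}_{p+1}=2t$ then it is of starting type $s_0$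 or $s_1$. *)

theory Defs
  imports Main "HOL-Library.Extended_Real"
begin

(* A partition is represented as a list of positive naturals in non-increasing
   order; pi_i (1-based) is xs ! (i-1). *)
definition is_partition :: "nat list \<Rightarrow> bool" where
  "is_partition xs \<longleftrightarrow> sorted_wrt (\<ge>) xs \<and> (\<forall>x\<in>set xs. 0 < x)"

(* Goellnitz-Gordon marking: marks aligned with the list; parts processed from
   the smallest (end of the list) to the largest (head of the list). *)
fun gg :: "nat list \<Rightarrow> nat list" where
  "gg [] = []"
| "gg (x # rest) =
     (LEAST m. 0 < m \<and>
        m \<notin> {gg rest ! j | j. j < length rest \<and>
                   int x - int (rest ! j) \<le> 2 \<and>
                   (odd x \<longrightarrow> int x - int (rest ! j) < 2)}) # gg rest"

definition N_mark :: "nat list \<Rightarrow> nat \<Rightarrow> nat" where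
  "N_mark xs i = length (filter (\<lambda>j. gg xs ! j = i) [0..<length xs])"

definition marked_parts :: "nat list \<Rightarrow> nat \<Rightarrow> nat list" where
  "marked_parts xs i = map (\<lambda>j. xs ! j) (filter (\<lambda>j. gg xs ! j = i) [0..<length xs])"

definition mp :: "nat list \<Rightarrow> nat \<Rightarrow> nat \<Rightarrow> nat" where
  "mp xs i j = marked_parts xs i ! (j - 1)"

definition mpe :: "nat list \<Rightarrow> nat \<Rightarrow> nat \<Rightarrow> ereal" where
  "mpe xs i j = (if j = 0 then \<infinity>
                 else if j \<le> N_mark xs i then ereal (real (mp xs i j))
                 else -\<infinity>)"

definition one_marked :: "nat list \<Rightarrow> int \<Rightarrow> bool" where
  "one_marked xs a \<longleftrightarrow> (\<exists>j<length xs. int (xs ! j) = a \<and> gg xs ! j = 1)"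

definition occurs :: "nat list \<Rightarrow> int \<Rightarrow> bool" where
  "occurs xs a \<longleftrightarrow> (\<exists>j<length xs. int (xs ! j) = a)"

definition C_kr :: "nat \<Rightarrow> nat \<Rightarrow> nat list \<Rightarrow> bool" where
  "C_kr k r xs \<longleftrightarrow> is_partition xs
     \<and> (\<forall>i<length xs. \<forall>j<length xs. i \<noteq> j \<and> xs ! i = xs ! j \<longrightarrow> even (xs ! i))
     \<and> (\<forall>i. i + k - 1 < length xs \<longrightarrow>
           xs ! (i + k - 1) + 2 \<le> xs ! i \<and>
           (even (xs ! i) \<longrightarrow> xs ! (i + k - 1) + 2 < xs ! i))
     \<and> length (filter (\<lambda>x. x \<le> 2) xs) \<le> r - 1"

datatype stype = S_m1 | S0 | S1 | S2 | S3 | S_none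

definition start_l :: "nat list \<Rightarrow> nat" where
  "start_l xs = (GREATEST l. l \<le> N_mark xs 2 \<and>
                  (\<forall>x\<in>set xs. odd x \<longrightarrow> ereal (real x) < mpe xs 2 l))"

(* type and auxiliary sigma_b for b = 1, ..., l (cases tried in order) *)
fun start_aux :: "nat list \<Rightarrow> nat \<Rightarrow> stype \<times> int" where
  "start_aux xs 0 = (S_none, 0)"
| "start_aux xs (Suc 0) =
     (let q = int (mp xs 2 1) in
      if one_marked xs (q - 1) \<and> \<not> occurs xs (q + 2) then (S0, q - 1)
      else if one_marked xs (q - 2) \<and> \<not> occurs xs (q + 2) then (S1, q - 2)
      else if one_marked xs (q + 2) then (S2, q + 2)
      else if one_marked xs q then (S3, q)
      else (S_none, 0))"
| "start_aux xs (Suc (Suc b)) =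
     (let q = int (mp xs 2 (Suc (Suc b))); s = snd (start_aux xs (Suc b)) in
      if one_marked xs (q - 1) \<and> (one_marked xs (q + 2) \<longrightarrow> s = q + 2) then (S0, q - 1)
      else if one_marked xs (q - 2) \<and> (one_marked xs (q + 2) \<longrightarrow> s = q + 2) then (S1, q - 2)
      else if one_marked xs (q + 2) \<and> s \<noteq> q + 2 then (S2, q + 2)
      else if one_marked xs q then (S3, q)
      else (S_none, 0))"

definition start_type :: "nat list \<Rightarrow> nat \<Rightarrow> stype" where
  "start_type xs b =
     (if 1 \<le> b \<and> b \<le> start_l xs then fst (start_aux xs b)
      else if start_l xs < b \<and> b \<le> N_mark xs 2 then S_m1
      else S_none)"

definition C_less :: "nat \<Rightarrow> nat \<Rightarrow> nat \<Rightarrow> nat \<Rightarrow> nat list \<Rightarrow> bool" where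
  "C_less k r p t xs \<longleftrightarrow> C_kr k r xs
     \<and> (\<forall>x\<in>set xs. odd x \<longrightarrow> x < 2 * t + 1)
     \<and> p \<le> N_mark xs 2
     \<and> mpe xs 2 (p + 1) < ereal (real (2 * t + 1))
     \<and> ereal (real (2 * t + 1)) < mpe xs 2 p
     \<and> (mpe xs 2 p = ereal (real (2 * t + 2)) \<longrightarrow> start_type xs p \<in> {S2, S3})
     \<and> (mpe xs 2 (p + 1) = ereal (real (2 * t)) \<longrightarrow> start_type xs (p + 1) \<in> {S0, S1})"

end

theory Submission
  imports Defs
begin

(* Suppose 2t+2 and 2t+4 both occur. The window condition on pi^(2)_p and pi^(2)_(p+1) leaves
   no 2-marked part in [2t+1, 2t+5], so 2t+4 is 1-marked, and a part 2t+2, which lies in its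
   Goellnitz-Gordon window, can be marked neither 1 nor 2. Its mark is therefore at least 3, so
   its window contains a 1-marked and a 2-marked part; as there are no odd parts >= 2t+1, both
   equal 2t. A 2-marked 2t forces pi^(2)_(p+1) = 2t, whose starting type s0 or s1 supplies a
   1-marked 2t-1 or 2t-2, which lies in the window of the 1-marked 2t: a contradiction. *)

definition gg_conflict :: "nat list \<Rightarrow> nat \<Rightarrow> nat \<Rightarrow> bool" where
  "gg_conflict xs j i \<longleftrightarrow> j < i \<and> i < length xs \<and> int (xs ! j) - int (xs ! i) \<le> 2 \<and>
     (odd (xs ! j) \<longrightarrow> int (xs ! j) - int (xs ! i) < 2)"

lemma length_gg [simp]: "length (gg xs) = length xs"
  by (induction xs) auto

lemma gg_conflict_Cons_Suc: "gg_conflict (x # xs) (Suc j) (Suc i) \<longleftrightarrow> gg_conflict xs j i"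
  by (simp add: gg_conflict_def)

lemma gg_conflict_Cons_0: "gg_conflict (x # xs) 0 (Suc i) \<longleftrightarrow>
    i < length xs \<and> int x - int (xs ! i) \<le> 2 \<and> (odd x \<longrightarrow> int x - int (xs ! i) < 2)"
  by (simp add: gg_conflict_def)

lemma gg_conflict_imp_Suc: "gg_conflict (x # xs) j i \<Longrightarrow> \<exists>i'. i = Suc i'"
  by (cases i) (auto simp: gg_conflict_def)

lemma gg_conflict_marks_Cons:
  "{gg (x # xs) ! i | i. gg_conflict (x # xs) j i} = {gg xs ! i | i. gg_conflict (x # xs) j (Suc i)}"
proof -
  have "{i. gg_conflict (x # xs) j i} = Suc ` {i. gg_conflict (x # xs) j (Suc i)}"
    by (auto simp: image_iff dest: gg_conflict_imp_Suc)
  then have "(\<lambda>i. gg (x # xs) ! i) ` {i. gg_conflict (x # xs) j i}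
      = (\<lambda>i. gg xs ! i) ` {i. gg_conflict (x # xs) j (Suc i)}"
    by (simp add: image_image)
  then show ?thesis
    by blast
qed

lemma gg_nth:
  "j < length xs \<Longrightarrow> gg xs ! j = (LEAST m. 0 < m \<and> m \<notin> {gg xs ! i | i. gg_conflict xs j i})"
proof (induction xs arbitrary: j)
  case Nil
  then show ?case by simp
next
  case (Cons x xs)
  have "gg (x # xs) ! j = (LEAST m. 0 < m \<and> m \<notin> {gg xs ! i | i. gg_conflict (x # xs) j (Suc i)})"
  proof (cases j)
    case 0
    then show ?thesis by (simp add: gg_conflict_Cons_0)
  next
    case (Suc j')
    then show ?thesis using Cons by (simp add: gg_conflict_Cons_Suc)
  qed
  then show ?case
    by (simp only: gg_conflict_marks_Cons)
qed

lemma finite_gg_conflict_marks: "finite {gg xs ! i | i. gg_conflict xs j i}"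
  by (rule finite_subset[of _ "set (gg xs)"]) (auto simp: gg_conflict_def)

lemma gg_nth_spec:
  assumes "j < length xs"
  shows "0 < gg xs ! j \<and> gg xs ! j \<notin> {gg xs ! i | i. gg_conflict xs j i}"
proof -
  let ?S = "{gg xs ! i | i. gg_conflict xs j i}"
  have "finite (insert 0 ?S)"
    using finite_gg_conflict_marks by blast
  then obtain m where "m \<notin> insert 0 ?S"
    using ex_new_if_finite[OF infinite_UNIV_nat] by blast
  then have "0 < m \<and> m \<notin> ?S"
    by simp
  then show ?thesis
    unfolding gg_nth[OF assms] by (rule LeastI)
qed

lemma gg_nth_pos: "j < length xs \<Longrightarrow> 0 < gg xs ! j"
  using gg_nth_spec by blast

lemma gg_nth_neq_if_conflict: "gg_conflict xs j i \<Longrightarrow> gg xs ! j \<noteq> gg xs ! i"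
  using gg_nth_spec[of j xs] by (auto simp: gg_conflict_def)

lemma gg_nth_conflict_below:
  assumes "j < length xs" and "0 < m" and "m < gg xs ! j"
  shows "\<exists>i. gg_conflict xs j i \<and> gg xs ! i = m"
  using not_less_Least[of m] assms unfolding gg_nth[OF assms(1)] by blast

lemma sorted_wrt_ge_nth_antimono:
  "sorted_wrt (\<ge>) (xs :: 'a :: order list) \<Longrightarrow> i \<le> j \<Longrightarrow> j < length xs \<Longrightarrow> xs ! j \<le> xs ! i"
  by (cases "i = j") (auto simp: sorted_wrt_iff_nth_less)

lemma gg_conflict_bounds:
  assumes "sorted_wrt (\<ge>) xs" and "gg_conflict xs j i"
  shows "xs ! i \<le> xs ! j \<and> xs ! j \<le> xs ! i + 2"
  using assms sorted_wrt_ge_nth_antimono[OF assms(1), of j i] unfolding gg_conflict_def by auto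

lemma gg_conflict_if_even:
  assumes "sorted_wrt (\<ge>) xs" and "i < length xs" and "j < length xs"
    and "xs ! i < xs ! j" and "xs ! j \<le> xs ! i + 2" and "even (xs ! j)"
  shows "gg_conflict xs j i"
proof -
  have "j < i"
    using sorted_wrt_ge_nth_antimono[OF assms(1), of i j] assms(3,4) by (meson leD le_less_linear)
  then show ?thesis
    using assms unfolding gg_conflict_def by auto
qed

lemma not_one_marked_within_2_below_even:
  assumes "sorted_wrt (\<ge>) xs" and "even a" and "b < a" and "a \<le> b + 2" and "one_marked xs a"
  shows "\<not> one_marked xs b"
proof
  assume "one_marked xs b"
  then obtain i where i: "i < length xs" "int (xs ! i) = b" "gg xs ! i = 1"
    unfolding one_marked_def by blast
  obtain j where j: "j < length xs" "int (xs ! j) = a" "gg xs ! j = 1"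
    using assms(5) unfolding one_marked_def by blast
  have "gg_conflict xs j i"
    using assms i j by (intro gg_conflict_if_even) auto
  then show False
    using gg_nth_neq_if_conflict i(3) j(3) by metis
qed

lemma C_less_sorted: "C_less k r p t xs \<Longrightarrow> sorted_wrt (\<ge>) xs"
  unfolding C_less_def C_kr_def is_partition_def by blast

lemma set_marked_parts: "set (marked_parts xs m) = {xs ! j | j. j < length xs \<and> gg xs ! j = m}"
  unfolding marked_parts_def by auto

lemma sorted_marked_parts: "sorted_wrt (\<ge>) xs \<Longrightarrow> sorted_wrt (\<ge>) (marked_parts xs m)"
  unfolding marked_parts_def sorted_wrt_map
  by (rule sorted_wrt_filter) (simp add: sorted_wrt_iff_nth_less)

lemma length_marked_parts: "length (marked_parts xs m) = N_mark xs m"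
  unfolding marked_parts_def N_mark_def by simp

lemma mpe_cases: "mpe xs m b = \<infinity> \<or> mpe xs m b = -\<infinity> \<or> mpe xs m b = ereal (real (mp xs m b))"
  unfolding mpe_def by auto

lemma mpe_antimono:
  assumes "sorted_wrt (\<ge>) xs" and "b \<le> b'"
  shows "mpe xs m b' \<le> mpe xs m b"
proof -
  have "mp xs m b' \<le> mp xs m b" if "1 \<le> b" "b' \<le> N_mark xs m"
    using that assms sorted_wrt_ge_nth_antimono[OF sorted_marked_parts[OF assms(1)], of "b - 1" "b' - 1" m]
    unfolding mp_def length_marked_parts by simp
  then show ?thesis
    using assms(2) unfolding mpe_def by auto
qed

lemma mpe_of_marked_part:
  assumes "y \<in> set (marked_parts xs m)"
  obtains b where "1 \<le> b" and "mpe xs m b = ereal (real y)"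
proof -
  obtain b where "b < N_mark xs m" and "marked_parts xs m ! b = y"
    using assms by (auto simp: in_set_conv_nth length_marked_parts)
  then have "mpe xs m (Suc b) = ereal (real y)"
    unfolding mpe_def mp_def by simp
  then show ?thesis
    using that[of "Suc b"] by simp
qed

lemma fst_start_aux_S0_S1:
  assumes "fst (start_aux xs b) \<in> {S0, S1}"
  shows "one_marked xs (int (mp xs 2 b) - 1) \<or> one_marked xs (int (mp xs 2 b) - 2)"
proof -
  consider "b = 0" | "b = Suc 0" | b' where "b = Suc (Suc b')"
    by (metis not0_implies_Suc)
  then show ?thesis
  proof cases
    case 3
    then show ?thesis
      using assms unfolding 3 start_aux.simps(3) Let_def by (simp split: if_split_asm)
  qed (use assms in \<open>simp_all add: Let_def split: if_split_asm\<close>)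
qed

lemma start_type_S0_S1:
  "start_type xs b \<in> {S0, S1} \<Longrightarrow>
    one_marked xs (int (mp xs 2 b) - 1) \<or> one_marked xs (int (mp xs 2 b) - 2)"
  unfolding start_type_def by (intro fst_start_aux_S0_S1) (auto split: if_splits)

lemma two_and_one_marked_2t_if_2t2_and_2t4_occur:
  assumes sorted: "sorted_wrt (\<ge>) xs"
    and gap: "\<And>y. y \<in> set (marked_parts xs 2) \<Longrightarrow> y \<le> 2 * t \<or> 2 * t + 6 \<le> y"
    and "2 * t + 1 \<notin> set xs" and "2 * t + 2 \<in> set xs" and "2 * t + 4 \<in> set xs"
  shows "2 * t \<in> set (marked_parts xs 2) \<and> one_marked xs (int (2 * t))"
proof -
  have two_marked: "xs ! j \<le> 2 * t \<or> 2 * t + 6 \<le> xs ! j" if "j < length xs" "gg xs ! j = 2" for j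
    using gap that unfolding set_marked_parts by blast
  obtain a where a: "a < length xs" "xs ! a = 2 * t + 4"
    using assms(5) by (metis in_set_conv_nth)
  obtain c where c: "c < length xs" "xs ! c = 2 * t + 2"
    using assms(4) by (metis in_set_conv_nth)
  have "gg xs ! a = 1"
  proof (rule ccontr)
    assume "gg xs ! a \<noteq> 1"
    moreover have "gg xs ! a \<noteq> 2"
      using two_marked a by fastforce
    ultimately obtain i where "gg_conflict xs a i" "gg xs ! i = 2"
      using gg_nth_conflict_below[OF a(1), of 2] gg_nth_pos[OF a(1)] by auto
    then show False
      using two_marked gg_conflict_bounds[OF sorted] a by (fastforce simp: gg_conflict_def)
  qed
  then have not_one_marked_2t2: "gg xs ! i \<noteq> 1" if "i < length xs" "xs ! i = 2 * t + 2" for i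
  proof -
    have "gg_conflict xs a i"
      using gg_conflict_if_even[OF sorted that(1) a(1)] a(2) that(2) by simp
    then show ?thesis
      using gg_nth_neq_if_conflict \<open>gg xs ! a = 1\<close> by metis
  qed
  have "2 < gg xs ! c"
    using not_one_marked_2t2[OF c] two_marked[OF c(1)] gg_nth_pos[OF c(1)] c(2) by fastforce
  obtain i2 where i2: "gg_conflict xs c i2" "gg xs ! i2 = 2"
    using gg_nth_conflict_below[OF c(1), of 2] \<open>2 < gg xs ! c\<close> by auto
  obtain i1 where i1: "gg_conflict xs c i1" "gg xs ! i1 = 1"
    using gg_nth_conflict_below[OF c(1), of 1] \<open>2 < gg xs ! c\<close> by auto
  have i12: "i1 < length xs" "i2 < length xs"
    using i1 i2 by (auto simp: gg_conflict_def)
  have "xs ! i2 = 2 * t"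
    using gg_conflict_bounds[OF sorted i2(1)] two_marked[OF i12(2) i2(2)] c(2) by simp
  then have "2 * t \<in> set (marked_parts xs 2)"
    using i12(2) i2(2) unfolding set_marked_parts by force
  moreover have "xs ! i1 = 2 * t"
  proof -
    have "xs ! i1 \<noteq> 2 * t + 1"
      using assms(3) nth_mem[OF i12(1)] by metis
    moreover have "xs ! i1 \<noteq> 2 * t + 2"
      using not_one_marked_2t2[OF i12(1)] i1(2) by blast
    ultimately show ?thesis
      using gg_conflict_bounds[OF sorted i1(1)] c(2) by simp
  qed
  then have "one_marked xs (int (2 * t))"
    using i12(1) i1(2) unfolding one_marked_def by force
  ultimately show ?thesis ..
qed

lemma C_less_two_marked_gap:
  assumes "C_less k r p t xs" and "ereal (real (2 * t + 6)) \<le> mpe xs 2 p"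
    and "y \<in> set (marked_parts xs 2)"
  shows "y \<le> 2 * t \<or> 2 * t + 6 \<le> y"
proof -
  have sorted: "sorted_wrt (\<ge>) xs"
    using C_less_sorted[OF assms(1)] .
  have below: "mpe xs 2 (p + 1) < ereal (real (2 * t + 1))"
    using assms(1) unfolding C_less_def by blast
  obtain b where "mpe xs 2 b = ereal (real y)"
    using mpe_of_marked_part[OF assms(3)] by blast
  then consider "ereal (real (2 * t + 6)) \<le> ereal (real y)" | "ereal (real y) < ereal (real (2 * t + 1))"
    using order_trans[OF assms(2) mpe_antimono[OF sorted, of b p 2]]
      le_less_trans[OF mpe_antimono[OF sorted, of "p + 1" b 2] below]
    by (cases "b \<le> p") auto
  then show ?thesis
    by cases auto
qed

lemma C_less_one_marked_below_2t:
  assumes "C_less k r p t xs" and "2 * t \<in> set (marked_parts xs 2)"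
  shows "one_marked xs (int (2 * t) - 1) \<or> one_marked xs (int (2 * t) - 2)"
proof -
  have sorted: "sorted_wrt (\<ge>) xs"
    using C_less_sorted[OF assms(1)] .
  have below: "mpe xs 2 (p + 1) < ereal (real (2 * t + 1))"
    and above: "ereal (real (2 * t + 1)) < mpe xs 2 p"
    and start: "mpe xs 2 (p + 1) = ereal (real (2 * t)) \<longrightarrow> start_type xs (p + 1) \<in> {S0, S1}"
    using assms(1) unfolding C_less_def by blast+
  obtain b where b: "mpe xs 2 b = ereal (real (2 * t))"
    using mpe_of_marked_part[OF assms(2)] by blast
  have "p < b"
  proof (rule ccontr)
    assume "\<not> p < b"
    then have "ereal (real (2 * t + 1)) < ereal (real (2 * t))"
      using less_le_trans[OF above mpe_antimono[OF sorted, of b p 2]] b by simp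
    then show False
      by simp
  qed
  then have lower: "ereal (real (2 * t)) \<le> mpe xs 2 (p + 1)"
    using mpe_antimono[OF sorted, of "p + 1" b 2] b by simp
  then have finite: "mpe xs 2 (p + 1) = ereal (real (mp xs 2 (p + 1)))"
    using below mpe_cases[of xs 2 "p + 1"] by auto
  then have "mp xs 2 (p + 1) = 2 * t"
    using lower below by simp
  then show ?thesis
    using finite start start_type_S0_S1[of xs "p + 1"] by simp
qed

theorem corollary2p5:
  fixes k r p t :: nat and xs :: "nat list"
  assumes "r \<ge> 3" and "k \<ge> r"
    and "C_less k r p t xs"
    and "mpe xs 2 p \<ge> ereal (real (2 * t + 6))"
  shows "\<not> (2 * t + 2 \<in> set xs \<and> 2 * t + 4 \<in> set xs)"
proof
  assume "2 * t + 2 \<in> set xs \<and> 2 * t + 4 \<in> set xs"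
  moreover have sorted: "sorted_wrt (\<ge>) xs"
    using C_less_sorted[OF assms(3)] .
  moreover have "2 * t + 1 \<notin> set xs"
    using assms(3) unfolding C_less_def by auto
  ultimately have "2 * t \<in> set (marked_parts xs 2)" and one_marked_2t: "one_marked xs (int (2 * t))"
    using two_and_one_marked_2t_if_2t2_and_2t4_occur C_less_two_marked_gap[OF assms(3,4)] by blast+
  then have "one_marked xs (int (2 * t) - 1) \<or> one_marked xs (int (2 * t) - 2)"
    using C_less_one_marked_below_2t[OF assms(3)] by blast
  then show False
    using not_one_marked_within_2_below_even[OF sorted _ _ _ one_marked_2t] by force
qed

end
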